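(* Let $b>2$ and $d\in\{1,\dots,b-1\}$. Then $H^{(0)}>b\log b-b\log\!\left(1+\frac1d\right)$. Consequently $H^{(0)}>b\log(b/2)$.
   Context: For an integer $n\ge0$, $k(n)$ denotes the number of occurrences of the digit $d$ in the base-$b$ representation of $n$ without leading zeros. $H^{(0)}=\sum_{n\ge1,\ k(n)=0}1/n$ is the sum of reciprocals of positive integers whose base-$b$ representation does not contain the digit $d$. *)

theory Defs
  imports "HOL-Analysis.Analysis"
begin

text \<open>Base-b digits of n, least significant first, without leading zeros
  (n = 0 has the empty digit list).\<close>
fun digits_base :: "nat \<Rightarrow> nat \<Rightarrow> nat list" where
  "digits_base b n = (if b < 2 \<or> n = 0 then [] else (n mod b) # digits_base b (n div b))"

definition digit_count :: "nat \<Rightarrow> nat \<Rightarrow> nat \<Rightarrow> nat" where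
  "digit_count b d n = count_list (digits_base b n) d"

definition H0 :: "nat \<Rightarrow> nat \<Rightarrow> real" where
  "H0 b d = infsum (\<lambda>n. 1 / real n) {n. n \<ge> 1 \<and> digit_count b d n = 0}"

end

theory Submission
  imports Defs
begin

(* With w(n) = b ln(1 + 1/n), the weights of the b numbers b n + j (j < b) telescope to w(n).
   Dropping the forbidden one, b n + d, loses w(b n + d) < b/(b n) = 1/n, so every d-free n
   satisfies w(n) < 1/n + (sum of w over its d-free one-digit extensions).  Summed over all
   d-free n, the extensions run exactly once through the d-free numbers >= b; their total
   weight is finite and cancels, leaving (sum of w over the one-digit d-free numbers) < H0,
   and that sum telescopes to b ln b - b ln(1 + 1/d).  The same self-similarity gives
   summability: the part >= b of a partial sum is at most (1 - 1/b) times a shorter one. *)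

declare digits_base.simps [simp del]

lemma digit_count_0 [simp]: "digit_count b d 0 = 0"
  unfolding digit_count_def by (subst digits_base.simps) simp

lemma digit_count_pos:
  "2 \<le> b \<Longrightarrow> 0 < n \<Longrightarrow>
    digit_count b d n = (if n mod b = d then 1 else 0) + digit_count b d (n div b)"
  unfolding digit_count_def by (subst digits_base.simps) simp

definition digit_free :: "nat \<Rightarrow> nat \<Rightarrow> nat set" where
  "digit_free b d = {n. 1 \<le> n \<and> digit_count b d n = 0}"

lemma digit_free_iff:
  assumes "2 \<le> b"
  shows "n \<in> digit_free b d \<longleftrightarrow>
    1 \<le> n \<and> n mod b \<noteq> d \<and> (n div b = 0 \<or> n div b \<in> digit_free b d)"
  using digit_count_pos[OF assms, of n d] by (auto simp: digit_free_def split: if_splits)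

lemma digit_free_below_base:
  assumes "2 \<le> b"
  shows "{n \<in> digit_free b d. n < b} = {1..<b} - {d}"
proof -
  have "n \<in> digit_free b d \<longleftrightarrow> 1 \<le> n \<and> n \<noteq> d" if "n < b" for n
    using digit_free_iff[OF assms, of n d] that by simp
  then show ?thesis by auto
qed

lemma inj_on_append_digit: "inj_on (\<lambda>(m, j). b * m + j) (UNIV \<times> {..<b::nat})"
proof (rule inj_onI, clarsimp)
  fix m j m' j' :: nat
  assume j: "j < b" "j' < b" and eq: "b * m + j = b * m' + j'"
  from j have "(b * m + j) div b = m" "(b * m + j) mod b = j"
    and "(b * m' + j') div b = m'" "(b * m' + j') mod b = j'" by auto
  with eq show "m = m' \<and> j = j'" by metis
qed

lemma digit_free_above_base:
  assumes "2 \<le> b"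
  shows "{n \<in> digit_free b d. b \<le> n} =
    (\<lambda>(m, j). b * m + j) ` (digit_free b d \<times> ({..<b} - {d}))"
proof (intro set_eqI iffI)
  fix n assume n: "n \<in> {n \<in> digit_free b d. b \<le> n}"
  then have "n div b \<in> digit_free b d" "n mod b \<in> {..<b} - {d}"
    using assms by (auto simp: digit_free_iff[OF assms, of n] div_eq_0_iff)
  moreover have "n = b * (n div b) + n mod b" by simp
  ultimately show "n \<in> (\<lambda>(m, j). b * m + j) ` (digit_free b d \<times> ({..<b} - {d}))"
    by (intro image_eqI[of _ _ "(n div b, n mod b)"]) auto
next
  fix n assume "n \<in> (\<lambda>(m, j). b * m + j) ` (digit_free b d \<times> ({..<b} - {d}))"
  then obtain m j where n: "n = b * m + j" "m \<in> digit_free b d" "j < b" "j \<noteq> d" by auto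
  then have "n div b = m" "n mod b = j" "1 \<le> m" by (auto simp: digit_free_def)
  moreover have "b \<le> n"
    using n(1) \<open>1 \<le> m\<close> by (metis le_add1 mult_le_mono2 nat_mult_1_right order_trans)
  ultimately have "1 \<le> n \<and> n mod b \<noteq> d \<and> n div b \<in> digit_free b d"
    using n by auto
  then have "n \<in> digit_free b d"
    by (intro digit_free_iff[OF assms, THEN iffD2]) blast
  with \<open>b \<le> n\<close> show "n \<in> {n \<in> digit_free b d. b \<le> n}" by blast
qed

lemma digit_free_ge_1: "n \<in> digit_free b d \<Longrightarrow> 1 \<le> n"
  by (simp add: digit_free_def)

lemma sum_reciprocal_digit_free_above_base_le:
  assumes "2 \<le> b" "d < b"
  shows "(\<Sum>n | n \<in> digit_free b d \<and> b \<le> n \<and> n \<le> N. 1 / real n)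
    \<le> (1 - 1 / real b) * (\<Sum>m | m \<in> digit_free b d \<and> m \<le> N div b. 1 / real m)"
proof -
  let ?M = "{m. m \<in> digit_free b d \<and> m \<le> N div b}"
  let ?J = "{..<b} - {d}"
  let ?h = "\<lambda>(m, j). b * m + j"
  have fin: "finite ?M" by (rule finite_subset[of _ "{..N div b}"]) auto
  have inj: "inj_on ?h (?M \<times> ?J)"
    using inj_on_append_digit[of b] by (rule inj_on_subset) blast
  have "{n. n \<in> digit_free b d \<and> b \<le> n \<and> n \<le> N} \<subseteq> ?h ` (?M \<times> ?J)"
  proof
    fix n assume n: "n \<in> {n. n \<in> digit_free b d \<and> b \<le> n \<and> n \<le> N}"
    then have "n \<in> {n \<in> digit_free b d. b \<le> n}" by simp
    then have "n \<in> ?h ` (digit_free b d \<times> ?J)"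
      by (simp only: digit_free_above_base[OF assms(1)])
    then obtain m j where mj: "n = b * m + j" "m \<in> digit_free b d" "j \<in> ?J"
      by auto
    then have "n div b = m" by simp
    moreover have "n div b \<le> N div b" using n by (simp add: div_le_mono)
    ultimately have "m \<le> N div b" by simp
    with mj show "n \<in> ?h ` (?M \<times> ?J)" by auto
  qed
  then have "(\<Sum>n | n \<in> digit_free b d \<and> b \<le> n \<and> n \<le> N. 1 / real n)
      \<le> (\<Sum>n \<in> ?h ` (?M \<times> ?J). 1 / real n)"
    by (intro sum_mono2 finite_imageI finite_cartesian_product fin) auto
  also have "\<dots> = (\<Sum>(m, j) \<in> ?M \<times> ?J. 1 / real (b * m + j))"
    by (subst sum.reindex[OF inj]) (simp add: case_prod_beta)
  also have "\<dots> \<le> (\<Sum>(m, j) \<in> ?M \<times> ?J. 1 / (real b * real m))"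
    using assms(1)
    by (intro sum_mono) (auto intro!: frac_le mult_pos_pos dest: digit_free_ge_1 simp: case_prod_beta)
  also have "\<dots> = real (card ?J) * (\<Sum>m \<in> ?M. 1 / (real b * real m))"
    by (simp add: sum.cartesian_product[symmetric] sum_distrib_left)
  also have "\<dots> = (1 - 1 / real b) * (\<Sum>m \<in> ?M. 1 / real m)"
    using assms by (simp add: sum_distrib_left field_simps of_nat_diff)
  finally show ?thesis .
qed

lemma sum_reciprocal_digit_free_le:
  assumes "2 \<le> b" "d < b"
  shows "(\<Sum>n | n \<in> digit_free b d \<and> n \<le> N. 1 / real n)
    \<le> real b * (\<Sum>n \<in> {1..<b} - {d}. 1 / real n)"
proof (induction N rule: less_induct)
  case (less N)
  define c where "c = (\<Sum>n \<in> {1..<b} - {d}. 1 / real n)"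
  have "(\<Sum>n | n \<in> digit_free b d \<and> n \<le> N. 1 / real n) =
      (\<Sum>n \<in> {n. n \<in> digit_free b d \<and> n < b \<and> n \<le> N} \<union>
        {n. n \<in> digit_free b d \<and> b \<le> n \<and> n \<le> N}. 1 / real n)"
    by (rule sum.cong) auto
  also have "\<dots> = (\<Sum>n | n \<in> digit_free b d \<and> n < b \<and> n \<le> N. 1 / real n) +
      (\<Sum>n | n \<in> digit_free b d \<and> b \<le> n \<and> n \<le> N. 1 / real n)"
    by (rule sum.union_disjoint) (auto intro: finite_subset[of _ "{..N}"])
  also have "(\<Sum>n | n \<in> digit_free b d \<and> n < b \<and> n \<le> N. 1 / real n) \<le> c"
    unfolding c_def using digit_free_below_base[OF assms(1), of d]
    by (intro sum_mono2) auto
  also have "(\<Sum>n | n \<in> digit_free b d \<and> b \<le> n \<and> n \<le> N. 1 / real n) \<le> (1 - 1 / real b) * (real b * c)"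
  proof (cases "N = 0")
    case True
    have "0 \<le> (1 - 1 / real b) * (real b * c)"
      using assms(1) unfolding c_def by (intro mult_nonneg_nonneg sum_nonneg) auto
    with True assms(1) show ?thesis by simp
  next
    case False
    then have "N div b < N" using assms(1) by simp
    have "0 \<le> 1 - 1 / real b" using assms(1) by simp
    with less.IH[OF \<open>N div b < N\<close>] show ?thesis
      unfolding c_def
      by (rule order_trans[OF sum_reciprocal_digit_free_above_base_le[OF assms] mult_left_mono])
  qed
  finally show ?case using assms(1) by (simp add: c_def field_simps)
qed

lemma summable_on_reciprocal_digit_free:
  assumes "2 \<le> b" "d < b"
  shows "(\<lambda>n. 1 / real n) summable_on digit_free b d"
proof (rule nonneg_bdd_above_summable_on)
  show "bdd_above (sum (\<lambda>n. 1 / real n) ` {F. F \<subseteq> digit_free b d \<and> finite F})"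
  proof (rule bdd_aboveI2)
    fix F assume F: "F \<in> {F. F \<subseteq> digit_free b d \<and> finite F}"
    then have "F \<subseteq> {n. n \<in> digit_free b d \<and> n \<le> \<Sum>F}"
      by (auto intro: member_le_sum)
    then have "sum (\<lambda>n. 1 / real n) F \<le> (\<Sum>n | n \<in> digit_free b d \<and> n \<le> \<Sum>F. 1 / real n)"
      by (intro sum_mono2) (auto intro: finite_subset[of _ "{..\<Sum>F}"])
    also have "\<dots> \<le> real b * (\<Sum>n \<in> {1..<b} - {d}. 1 / real n)"
      by (rule sum_reciprocal_digit_free_le[OF assms])
    finally show "sum (\<lambda>n. 1 / real n) F \<le> real b * (\<Sum>n \<in> {1..<b} - {d}. 1 / real n)" .
  qed
qed simp

lemma sum_ln_one_plus_inverse: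
  fixes x :: real
  assumes "0 < x"
  shows "(\<Sum>j<m. ln (1 + 1 / (x + real j))) = ln (x + real m) - ln x"
proof (induction m)
  case (Suc m)
  have "1 + 1 / (x + real m) = (x + real (Suc m)) / (x + real m)"
    using assms by (simp add: field_simps)
  then have "ln (1 + 1 / (x + real m)) = ln (x + real (Suc m)) - ln (x + real m)"
    using assms by (simp add: ln_div add_pos_nonneg)
  with Suc show ?case by simp
qed simp

definition ln_weight :: "nat \<Rightarrow> nat \<Rightarrow> real" where
  "ln_weight b n = real b * ln (1 + 1 / real n)"

lemma ln_weight_nonneg: "0 \<le> ln_weight b n"
  by (simp add: ln_weight_def)

lemma ln_weight_le: "ln_weight b n \<le> real b / real n"
  unfolding ln_weight_def
  using mult_left_mono[OF ln_add_one_self_le_self[of "1 / real n"], of "real b"] by simp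

lemma sum_ln_weight_append_digits:
  assumes "0 < b" "0 < n"
  shows "(\<Sum>j<b. ln_weight b (b * n + j)) = ln_weight b n"
proof -
  have "(\<Sum>j<b. ln (1 + 1 / real (b * n + j))) = ln (real (b * n) + real b) - ln (real (b * n))"
    using sum_ln_one_plus_inverse[of "real (b * n)" b] assms by simp
  also have "\<dots> = ln (1 + 1 / real n)"
  proof -
    have pos: "0 < real (b * n)" "0 < 1 + 1 / real n"
      using assms by (auto intro: add_pos_nonneg)
    have "real (b * n) + real b = real (b * n) * (1 + 1 / real n)"
      using assms by (simp add: field_simps)
    then show ?thesis using ln_mult_pos[OF pos] by simp
  qed
  finally show ?thesis by (simp add: ln_weight_def sum_distrib_left[symmetric])
qed

lemma ln_weight_lt_reciprocal_plus_digits: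
  assumes "1 \<le> d" "d < b" "1 \<le> n"
  shows "ln_weight b n < 1 / real n + (\<Sum>j \<in> {..<b} - {d}. ln_weight b (b * n + j))"
proof -
  have "ln_weight b (b * n + d) \<le> real b / real (b * n + d)" by (rule ln_weight_le)
  also have "\<dots> < real b / real (b * n)"
  proof -
    have lt: "real (b * n) < real (b * n + d)" and pos: "0 < real (b * n)" "0 < real b"
      using assms by auto
    then show ?thesis
      by (intro divide_strict_left_mono[OF lt] mult_pos_pos) auto
  qed
  also have "\<dots> = 1 / real n"
    using assms by simp
  finally have "ln_weight b (b * n + d) < 1 / real n" .
  moreover have "(\<Sum>j \<in> {..<b} - {d}. ln_weight b (b * n + j)) = ln_weight b n - ln_weight b (b * n + d)"
    using sum_ln_weight_append_digits[of b n] assms by (simp add: sum_diff1)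
  ultimately show ?thesis by simp
qed

lemma sum_ln_weight_below_base:
  assumes "1 \<le> d" "d < b"
  shows "(\<Sum>n \<in> {1..<b} - {d}. ln_weight b n) = real b * ln (real b) - real b * ln (1 + 1 / real d)"
proof -
  have "(\<Sum>n \<in> {1..<b}. ln (1 + 1 / real n)) = (\<Sum>j < b - 1. ln (1 + 1 / (1 + real j)))"
    by (rule sum.reindex_bij_witness[of _ "\<lambda>j. j + 1" "\<lambda>n. n - 1"]) (auto simp: add.commute)
  also have "\<dots> = ln (real b)"
    using sum_ln_one_plus_inverse[of 1 "b - 1"] assms by (simp add: of_nat_diff)
  finally show ?thesis
    using assms by (simp add: ln_weight_def sum_diff1 sum_distrib_left[symmetric] right_diff_distrib)
qed

lemma has_sum_digit_free_above_base:
  fixes f :: "nat \<Rightarrow> real"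
  assumes "2 \<le> b" "(f has_sum s) {n \<in> digit_free b d. b \<le> n}"
  shows "((\<lambda>m. \<Sum>j \<in> {..<b} - {d}. f (b * m + j)) has_sum s) (digit_free b d)"
proof -
  let ?h = "\<lambda>(m, j). b * m + j"
  have "inj_on ?h (digit_free b d \<times> ({..<b} - {d}))"
    using inj_on_append_digit[of b] by (rule inj_on_subset) blast
  then have "((f \<circ> ?h) has_sum s) (digit_free b d \<times> ({..<b} - {d}))"
    using assms(2) by (simp add: has_sum_reindex[symmetric] digit_free_above_base[OF assms(1)])
  then show ?thesis
    by (rule has_sum_Sigma') (auto simp: has_sum_finite)
qed

lemma sum_ln_weight_lt_H0:
  assumes "2 < b" "1 \<le> d" "d < b"
  shows "(\<Sum>n \<in> {1..<b} - {d}. ln_weight b n) < H0 b d"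
proof -
  let ?A = "digit_free b d"
  let ?digits = "\<lambda>n. \<Sum>j \<in> {..<b} - {d}. ln_weight b (b * n + j)"
  have b: "2 \<le> b" using assms(1) by simp
  have H0: "((\<lambda>n. 1 / real n) has_sum H0 b d) ?A"
    unfolding H0_def digit_free_def[symmetric]
    using summable_on_reciprocal_digit_free[OF b assms(3)] by (rule has_sum_infsum)
  have "ln_weight b summable_on ?A"
    using summable_on_cmult_right[OF summable_on_reciprocal_digit_free[OF b assms(3)], of "real b"]
    by (rule summable_on_comparison_test) (auto simp: ln_weight_le ln_weight_nonneg)
  then obtain w where w: "(ln_weight b has_sum w) ?A"
    by (auto simp: summable_on_def)
  obtain x where x: "(ln_weight b has_sum x) {n \<in> ?A. b \<le> n}"
    using summable_on_subset_banach[OF \<open>ln_weight b summable_on ?A\<close>, of "{n \<in> ?A. b \<le> n}"]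
    by (auto simp: summable_on_def)
  have "(ln_weight b has_sum ((\<Sum>n \<in> {1..<b} - {d}. ln_weight b n) + x))
      ({n \<in> ?A. n < b} \<union> {n \<in> ?A. b \<le> n})"
    using x by (intro has_sum_Un_disjoint) (auto simp: digit_free_below_base[OF b])
  moreover have "{n \<in> ?A. n < b} \<union> {n \<in> ?A. b \<le> n} = ?A" by auto
  ultimately have w_eq: "w = (\<Sum>n \<in> {1..<b} - {d}. ln_weight b n) + x"
    using w has_sum_unique by metis
  have sum: "((\<lambda>n. 1 / real n + ?digits n) has_sum (H0 b d + x)) ?A"
    by (intro has_sum_add H0 has_sum_digit_free_above_base[OF b x])
  have lt: "ln_weight b n < 1 / real n + ?digits n" if "n \<in> ?A" for n
    using ln_weight_lt_reciprocal_plus_digits[OF assms(2,3) digit_free_ge_1[OF that]] .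
  have "(if d = 1 then 2 else 1) \<in> {n \<in> ?A. n < b}"
    unfolding digit_free_below_base[OF b] using assms by auto
  then have "w < H0 b d + x"
    using has_sum_strict_mono[OF w sum less_imp_le[OF lt] _ lt] by blast
  then show ?thesis using w_eq by simp
qed

theorem mainTheorem4:
  fixes b d :: nat
  assumes "b > 2" and "1 \<le> d" and "d \<le> b - 1"
  shows "(\<lambda>n. 1 / real n) summable_on {n. n \<ge> 1 \<and> digit_count b d n = 0} \<and>
    H0 b d > real b * ln (real b) - real b * ln (1 + 1 / real d) \<and>
    H0 b d > real b * ln (real b / 2)"
proof -
  have b: "2 \<le> b" and d: "d < b" using assms by auto
  have "(\<lambda>n. 1 / real n) summable_on {n. n \<ge> 1 \<and> digit_count b d n = 0}"
    using summable_on_reciprocal_digit_free[OF b d] by (simp add: digit_free_def)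
  moreover have "real b * ln (real b) - real b * ln (1 + 1 / real d) < H0 b d"
    using sum_ln_weight_lt_H0[OF assms(1,2) d] sum_ln_weight_below_base[OF assms(2) d] by simp
  moreover have "real b * ln (real b / 2) \<le> real b * ln (real b) - real b * ln (1 + 1 / real d)"
  proof -
    have "1 + 1 / real d \<le> 2" using assms(2) by simp
    then have "ln (1 + 1 / real d) \<le> ln 2" by (subst ln_le_cancel_iff) (auto intro: add_pos_nonneg)
    then have "real b * ln (1 + 1 / real d) \<le> real b * ln 2" by (rule mult_left_mono) simp
    moreover have "ln (real b / 2) = ln (real b) - ln 2" using b by (simp add: ln_divide_pos)
    ultimately show ?thesis by (simp add: right_diff_distrib)
  qed
  ultimately show ?thesis by linarith
qed

end
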